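(* Let $G$ be an oriented graph on $[n]$ with $|\mathcal{P}(G)|\ge 1$. Then \[\max_{\sigma,\rho\in\mathcal{P}(G)} d_\ell(\sigma,\rho)\le \max_{1\le i\le n}\{\,n-|R(i)|-|R^{-1}(i)|-1\,\}.\]
   Context: Write a permutation $\sigma\in S_n$ as $\sigma=\sigma_1\cdots\sigma_n$. A permutation $\sigma$ satisfies an oriented graph $G=([n],E)$ if $\sigma_u>\sigma_v$ for every oriented edge $u\to v\in E$; $\mathcal{P}(G)$ is the set of permutations satisfying $G$. Write $u\rightsquigarrow v$ if there is an oriented path from $u$ to $v$ in $G$. For a vertex $v$, $R(v)=\{u\in[n]\setminus\{v\}: v\rightsquigarrow u\}$ and $R^{-1}(v)=\{u\in[n]\setminus\{v\}: u\rightsquigarrow v\}$. The $\ell_\infty$-metric is $d_\ell(\sigma,\rho)=\max_{1\le i\le n}|\sigma_i-\rho_i|$. *)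

theory Defs
  imports "HOL-Combinatorics.Permutations"
begin

definition oriented_graph :: "nat \<Rightarrow> (nat \<times> nat) set \<Rightarrow> bool" where
  "oriented_graph n E \<longleftrightarrow> E \<subseteq> {1..n} \<times> {1..n} \<and>
     (\<forall>u v. (u, v) \<in> E \<longrightarrow> u \<noteq> v \<and> (v, u) \<notin> E)"

definition satisfying_perms :: "nat \<Rightarrow> (nat \<times> nat) set \<Rightarrow> (nat \<Rightarrow> nat) set" where
  "satisfying_perms n E = {\<sigma>. \<sigma> permutes {1..n} \<and> (\<forall>(u, v) \<in> E. \<sigma> u > \<sigma> v)}"

definition reach_out :: "nat \<Rightarrow> (nat \<times> nat) set \<Rightarrow> nat \<Rightarrow> nat set" where
  "reach_out n E v = {u \<in> {1..n} - {v}. (v, u) \<in> E\<^sup>+}"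

definition reach_in :: "nat \<Rightarrow> (nat \<times> nat) set \<Rightarrow> nat \<Rightarrow> nat set" where
  "reach_in n E v = {u \<in> {1..n} - {v}. (u, v) \<in> E\<^sup>+}"

definition linf_dist :: "nat \<Rightarrow> (nat \<Rightarrow> nat) \<Rightarrow> (nat \<Rightarrow> nat) \<Rightarrow> int" where
  "linf_dist n \<sigma> \<rho> = Max {\<bar>int (\<sigma> i) - int (\<rho> i)\<bar> | i. i \<in> {1..n}}"

end

theory Submission
  imports Defs
begin

text \<open>Every satisfying permutation decreases strictly along oriented paths, so \<open>\<sigma>\<close> maps
  the \<open>|R(i)|\<close> vertices reachable from \<open>i\<close> injectively below \<open>\<sigma> i\<close> and the \<open>|R\<^sup>-\<^sup>1(i)|\<close>
  vertices reaching \<open>i\<close> above it. Hence \<open>\<sigma> i\<close> lies in an interval of \<open>n - |R(i)| - |R\<^sup>-\<^sup>1(i)|\<close>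
  values that does not depend on \<open>\<sigma>\<close>, and any two satisfying permutations differ at \<open>i\<close> by
  less than its length.\<close>

lemma satisfying_perms_permutes:
  "\<sigma> \<in> satisfying_perms n E \<Longrightarrow> \<sigma> permutes {1..n}"
  by (simp add: satisfying_perms_def)

lemma satisfying_perms_trancl_less:
  assumes "\<sigma> \<in> satisfying_perms n E" "(u, v) \<in> E\<^sup>+"
  shows "\<sigma> v < \<sigma> u"
  using assms(2)
proof (induction rule: trancl_induct)
  case (base y)
  then show ?case using assms(1) unfolding satisfying_perms_def by blast
next
  case (step y z)
  then have "\<sigma> z < \<sigma> y" using assms(1) unfolding satisfying_perms_def by blast
  with step.IH show ?case by simp
qed

lemma satisfying_perms_card_reach_out_less:
  assumes \<sigma>: "\<sigma> \<in> satisfying_perms n E" and i: "i \<in> {1..n}"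
  shows "card (reach_out n E i) < \<sigma> i"
proof -
  have perm: "\<sigma> permutes {1..n}" using \<sigma> by (rule satisfying_perms_permutes)
  have "\<sigma> ` reach_out n E i \<subseteq> {1..<\<sigma> i}"
    using permutes_in_image[OF perm] satisfying_perms_trancl_less[OF \<sigma>]
    by (force simp: reach_out_def)
  then have "card (reach_out n E i) \<le> card {1..<\<sigma> i}"
    using permutes_inj[OF perm] by (intro card_inj_on_le) (auto intro: inj_on_subset)
  moreover have "\<sigma> i \<ge> 1" using permutes_in_image[OF perm] i by auto
  ultimately show ?thesis by simp
qed

lemma satisfying_perms_card_reach_in_le:
  assumes \<sigma>: "\<sigma> \<in> satisfying_perms n E" and i: "i \<in> {1..n}"
  shows "\<sigma> i + card (reach_in n E i) \<le> n"
proof -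
  have perm: "\<sigma> permutes {1..n}" using \<sigma> by (rule satisfying_perms_permutes)
  have "\<sigma> ` reach_in n E i \<subseteq> {\<sigma> i<..n}"
    using permutes_in_image[OF perm] satisfying_perms_trancl_less[OF \<sigma>]
    by (force simp: reach_in_def)
  then have "card (reach_in n E i) \<le> card {\<sigma> i<..n}"
    using permutes_inj[OF perm] by (intro card_inj_on_le) (auto intro: inj_on_subset)
  moreover have "\<sigma> i \<le> n" using permutes_in_image[OF perm] i by auto
  ultimately show ?thesis by simp
qed

lemma satisfying_perms_diff_le:
  assumes "\<sigma> \<in> satisfying_perms n E" "\<rho> \<in> satisfying_perms n E" "i \<in> {1..n}"
  shows "\<bar>int (\<sigma> i) - int (\<rho> i)\<bar>
           \<le> int n - int (card (reach_out n E i)) - int (card (reach_in n E i)) - 1"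
  using satisfying_perms_card_reach_out_less[OF assms(1,3)]
    satisfying_perms_card_reach_out_less[OF assms(2,3)]
    satisfying_perms_card_reach_in_le[OF assms(1,3)]
    satisfying_perms_card_reach_in_le[OF assms(2,3)]
  by linarith

lemma linf_dist_le:
  assumes "n \<ge> 1" "\<And>i. i \<in> {1..n} \<Longrightarrow> \<bar>int (\<sigma> i) - int (\<rho> i)\<bar> \<le> c"
  shows "linf_dist n \<sigma> \<rho> \<le> c"
  unfolding linf_dist_def using assms by (subst Max_le_iff) auto

theorem mainTheorem3:
  fixes n :: nat and E :: "(nat \<times> nat) set"
  assumes "n \<ge> 1"
    and "oriented_graph n E"
    and "card (satisfying_perms n E) \<ge> 1"
  shows "Max {linf_dist n \<sigma> \<rho> | \<sigma> \<rho>. \<sigma> \<in> satisfying_perms n E \<and> \<rho> \<in> satisfying_perms n E}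
         \<le> Max {int n - int (card (reach_out n E i)) - int (card (reach_in n E i)) - 1 | i. i \<in> {1..n}}"
proof -
  let ?S = "satisfying_perms n E"
  let ?B = "{int n - int (card (reach_out n E i)) - int (card (reach_in n E i)) - 1 | i. i \<in> {1..n}}"
  have finite_S: "finite ?S" and S_nonempty: "?S \<noteq> {}"
    using assms(3) card.infinite by fastforce+
  have "linf_dist n \<sigma> \<rho> \<le> Max ?B" if "\<sigma> \<in> ?S" "\<rho> \<in> ?S" for \<sigma> \<rho>
  proof (rule linf_dist_le[OF assms(1)])
    fix i assume i: "i \<in> {1..n}"
    have "\<bar>int (\<sigma> i) - int (\<rho> i)\<bar>
            \<le> int n - int (card (reach_out n E i)) - int (card (reach_in n E i)) - 1"
      using satisfying_perms_diff_le[OF that i] .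
    also have "\<dots> \<le> Max ?B" using i by (intro Max_ge) auto
    finally show "\<bar>int (\<sigma> i) - int (\<rho> i)\<bar> \<le> Max ?B" .
  qed
  moreover have "finite {linf_dist n \<sigma> \<rho> | \<sigma> \<rho>. \<sigma> \<in> ?S \<and> \<rho> \<in> ?S}"
    using finite_S by (intro finite_image_set2) simp_all
  ultimately show ?thesis using S_nonempty by (subst Max_le_iff) blast+
qed

end
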